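(* The maximum-matching size $m(\cdot)$ and the minimum vertex-cover size $VC(\cdot)$, viewed as functions on graph streams, are both $2$-almost-smooth.
   Context: A graph stream is a sequence of edges of a simple graph on vertex set $V=[n]$ (no edge appears twice). For a stream segment $S$, $m(S)$ is the maximum size of a matching (set of pairwise vertex-disjoint edges) in the graph on $V$ whose edges are those of $S$, and $VC(S)$ is the minimum size of a vertex cover (set of vertices meeting every edge) of that graph. For disjoint consecutive segments $A,B$, $AB$ is their concatenation. A function $f$ is $2$-almost-smooth if: (1) $f(A)\ge0$ for all $A$; (2) $f(B)\le f(AB)$ for all disjoint segments $A,B$; (3) $f(A)\le\mathrm{poly}(n)$; (4) for all disjoint consecutive segments $A,B,C$ with $f(AB)\neq0$, $f(ABC)\neq0$, $\frac{f(B)}{f(AB)}\le 2\cdot\frac{f(BC)}{f(ABC)}$. *)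

theory Defs
  imports Complex_Main
begin

type_synonym edge = "nat set"

definition valid_edge :: "nat \<Rightarrow> edge \<Rightarrow> bool" where
  "valid_edge n e \<longleftrightarrow> (\<exists>u v. u \<noteq> v \<and> u \<in> {1..n} \<and> v \<in> {1..n} \<and> e = {u, v})"

definition graph_stream :: "nat \<Rightarrow> edge list \<Rightarrow> bool" where
  "graph_stream n S \<longleftrightarrow> distinct S \<and> (\<forall>e\<in>set S. valid_edge n e)"

definition is_matching :: "edge set \<Rightarrow> bool" where
  "is_matching M \<longleftrightarrow> (\<forall>e\<in>M. \<forall>f\<in>M. e \<noteq> f \<longrightarrow> e \<inter> f = {})"

definition is_vertex_cover :: "nat \<Rightarrow> edge set \<Rightarrow> nat set \<Rightarrow> bool" where
  "is_vertex_cover n E C \<longleftrightarrow> C \<subseteq> {1..n} \<and> (\<forall>e\<in>E. e \<inter> C \<noteq> {})"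

definition max_matching :: "nat \<Rightarrow> edge list \<Rightarrow> real" where
  "max_matching n S = real (Max {card M | M. M \<subseteq> set S \<and> is_matching M})"

definition min_vertex_cover :: "nat \<Rightarrow> edge list \<Rightarrow> real" where
  "min_vertex_cover n S = real (Min {card C | C. is_vertex_cover n (set S) C})"

text \<open>Segments A, B, C are disjoint and consecutive, i.e. A @ B @ C is a graph stream.
  The poly(n) bound is uniform: some fixed polynomial c * (n+1)^k.\<close>
definition almost_smooth :: "real \<Rightarrow> (nat \<Rightarrow> edge list \<Rightarrow> real) \<Rightarrow> bool" where
  "almost_smooth \<alpha> f \<longleftrightarrow>
     (\<forall>n A. graph_stream n A \<longrightarrow> 0 \<le> f n A) \<and>
     (\<forall>n A B. graph_stream n (A @ B) \<longrightarrow> f n B \<le> f n (A @ B)) \<and>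
     (\<exists>c::real. \<exists>k::nat. \<forall>n A. graph_stream n A \<longrightarrow> f n A \<le> c * (real n + 1) ^ k) \<and>
     (\<forall>n A B C. graph_stream n (A @ B @ C) \<and> f n (A @ B) \<noteq> 0 \<and> f n (A @ B @ C) \<noteq> 0 \<longrightarrow>
        f n B / f n (A @ B) \<le> \<alpha> * (f n (B @ C) / f n (A @ B @ C)))"

end

theory Submission
  imports Defs
begin

text \<open>Both parameters, as functions of the edge set, are nonnegative, monotone and subadditive:
  a matching of \<open>E \<union> F\<close> splits into a matching inside \<open>E\<close> and one inside \<open>F\<close>, and the union
  of vertex covers of \<open>E\<close> and \<open>F\<close> covers \<open>E \<union> F\<close>. Any such function \<open>f\<close> is 2-almost-smooth:
  \<open>f(ABC) \<le> f(AB) + f(C) \<le> f(AB) + f(BC)\<close>, while \<open>f(B)\<close> is at most both \<open>f(AB)\<close> and \<open>f(BC)\<close>,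
  so \<open>f(B) f(ABC) \<le> 2 f(AB) f(BC)\<close>.\<close>

lemma ratio_le_twice_ratio:
  fixes b ab bc abc :: real
  assumes "0 \<le> b" "b \<le> ab" "b \<le> bc" "abc \<le> ab + bc" "0 < ab" "0 < abc"
  shows "b / ab \<le> 2 * (bc / abc)"
proof -
  have "b * abc \<le> b * ab + b * bc"
    using assms(1,4) mult_left_mono by (fastforce simp: distrib_left)
  also have "\<dots> \<le> bc * ab + ab * bc"
    using assms by (intro add_mono mult_right_mono) auto
  finally have "b * abc \<le> 2 * (ab * bc)" by simp
  with assms(5,6) show ?thesis by (simp add: field_simps)
qed

lemma almost_smooth_2_if_mono_subadditive:
  fixes g :: "nat \<Rightarrow> edge set \<Rightarrow> real"
  assumes nonneg: "\<And>n E. finite E \<Longrightarrow> \<forall>e\<in>E. valid_edge n e \<Longrightarrow> 0 \<le> g n E"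
    and mono: "\<And>n E F. finite F \<Longrightarrow> \<forall>e\<in>F. valid_edge n e \<Longrightarrow> E \<subseteq> F \<Longrightarrow> g n E \<le> g n F"
    and subadd: "\<And>n E F. finite E \<Longrightarrow> finite F \<Longrightarrow> \<forall>e\<in>E \<union> F. valid_edge n e \<Longrightarrow>
                   g n (E \<union> F) \<le> g n E + g n F"
    and bound: "\<And>n E. finite E \<Longrightarrow> \<forall>e\<in>E. valid_edge n e \<Longrightarrow> g n E \<le> c * (real n + 1) ^ k"
  shows "almost_smooth 2 (\<lambda>n S. g n (set S))"
  unfolding almost_smooth_def
proof (intro conjI allI impI exI)
  fix n A assume "graph_stream n A"
  then show "0 \<le> g n (set A)" and "g n (set A) \<le> c * (real n + 1) ^ k"
    using nonneg bound unfolding graph_stream_def by auto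
next
  fix n A B assume "graph_stream n (A @ B)"
  then show "g n (set B) \<le> g n (set (A @ B))"
    using mono[of "set (A @ B)" n "set B"] unfolding graph_stream_def by auto
next
  fix n A B C
  assume hyps: "graph_stream n (A @ B @ C) \<and> g n (set (A @ B)) \<noteq> 0 \<and> g n (set (A @ B @ C)) \<noteq> 0"
  let ?a = "set A" and ?b = "set B" and ?c = "set C"
  have valid: "\<forall>e\<in>?a \<union> ?b \<union> ?c. valid_edge n e"
    using hyps unfolding graph_stream_def by auto
  have "0 \<le> g n ?b" "0 \<le> g n (?a \<union> ?b)" "0 \<le> g n (?a \<union> ?b \<union> ?c)"
    using nonneg[of _ n] valid by auto
  moreover have "g n ?b \<le> g n (?a \<union> ?b)" "g n ?b \<le> g n (?b \<union> ?c)" "g n ?c \<le> g n (?b \<union> ?c)"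
    using mono[of _ n] valid by auto
  moreover have "g n (?a \<union> ?b \<union> ?c) \<le> g n (?a \<union> ?b) + g n ?c"
    using subadd[of "?a \<union> ?b" ?c n] valid by auto
  ultimately show "g n ?b / g n (set (A @ B)) \<le> 2 * (g n (set (B @ C)) / g n (set (A @ B @ C)))"
    using hyps by (intro ratio_le_twice_ratio) (auto simp: Un_assoc)
qed

lemma card_valid_edges_le:
  assumes "\<forall>e\<in>E. valid_edge n e"
  shows "card E \<le> n * n"
proof -
  have "E \<subseteq> (\<lambda>(u, v). {u, v}) ` ({1..n} \<times> {1..n})"
    using assms unfolding valid_edge_def by fastforce
  then have "card E \<le> card ((\<lambda>(u, v). {u, v}) ` ({1..n} \<times> {1..n}))"
    by (intro card_mono) auto
  also have "\<dots> \<le> card ({1..n} \<times> {1..n})"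
    by (rule card_image_le) auto
  finally show ?thesis by (simp add: card_cartesian_product)
qed

definition matching_number :: "edge set \<Rightarrow> nat" where
  "matching_number E = Max {card M | M. M \<subseteq> E \<and> is_matching M}"

lemma is_matching_subset: "is_matching M \<Longrightarrow> N \<subseteq> M \<Longrightarrow> is_matching N"
  unfolding is_matching_def by blast

lemma finite_matching_cards: "finite E \<Longrightarrow> finite {card M | M. M \<subseteq> E \<and> is_matching M}"
  by (rule finite_subset[of _ "card ` Pow E"]) auto

lemma card_matching_le_matching_number:
  "finite E \<Longrightarrow> M \<subseteq> E \<Longrightarrow> is_matching M \<Longrightarrow> card M \<le> matching_number E"
  unfolding matching_number_def by (rule Max_ge[OF finite_matching_cards]) auto

lemma ex_maximum_matching:
  assumes "finite E"
  obtains M where "M \<subseteq> E" "is_matching M" "matching_number E = card M"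
proof -
  have "{} \<subseteq> E \<and> is_matching {}" by (simp add: is_matching_def)
  then have "{card M | M. M \<subseteq> E \<and> is_matching M} \<noteq> {}" by blast
  from Max_in[OF finite_matching_cards[OF assms] this] that show thesis
    unfolding matching_number_def by auto
qed

lemma matching_number_mono:
  assumes "finite F" "E \<subseteq> F"
  shows "matching_number E \<le> matching_number F"
proof -
  from assms have "finite E" by (rule finite_subset[rotated])
  then obtain M where "M \<subseteq> E" "is_matching M" "matching_number E = card M"
    by (rule ex_maximum_matching)
  with assms show ?thesis by (metis card_matching_le_matching_number order_trans)
qed

lemma matching_number_Un_le:
  assumes "finite E" "finite F"
  shows "matching_number (E \<union> F) \<le> matching_number E + matching_number F"
proof -
  obtain M where M: "M \<subseteq> E \<union> F" "is_matching M" "matching_number (E \<union> F) = card M"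
    using assms by (metis ex_maximum_matching finite_Un)
  have "card M \<le> card (M \<inter> E) + card (M - E)"
    by (metis Int_Diff_Un card_Un_le)
  also have "card (M \<inter> E) \<le> matching_number E"
    using assms M by (intro card_matching_le_matching_number) (auto intro: is_matching_subset)
  also have "card (M - E) \<le> matching_number F"
    using assms M by (intro card_matching_le_matching_number) (auto intro: is_matching_subset)
  finally show ?thesis using M(3) by simp
qed

lemma matching_number_le_card: "finite E \<Longrightarrow> matching_number E \<le> card E"
  by (metis card_mono ex_maximum_matching)

definition vertex_cover_number :: "nat \<Rightarrow> edge set \<Rightarrow> nat" where
  "vertex_cover_number n E = Min {card C | C. is_vertex_cover n E C}"

lemma finite_vertex_cover_cards: "finite {card C | C. is_vertex_cover n E C}"
  by (rule finite_subset[of _ "card ` Pow {1..n}"]) (auto simp: is_vertex_cover_def)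

lemma vertex_cover_number_le_card:
  "is_vertex_cover n E C \<Longrightarrow> vertex_cover_number n E \<le> card C"
  unfolding vertex_cover_number_def by (rule Min_le[OF finite_vertex_cover_cards]) auto

lemma is_vertex_cover_all_vertices: "\<forall>e\<in>E. valid_edge n e \<Longrightarrow> is_vertex_cover n E {1..n}"
  unfolding is_vertex_cover_def valid_edge_def by fastforce

lemma vertex_cover_number_le_n: "\<forall>e\<in>E. valid_edge n e \<Longrightarrow> vertex_cover_number n E \<le> n"
  using vertex_cover_number_le_card[OF is_vertex_cover_all_vertices] by fastforce

lemma ex_minimum_vertex_cover:
  assumes "\<forall>e\<in>E. valid_edge n e"
  obtains C where "is_vertex_cover n E C" "vertex_cover_number n E = card C"
proof -
  from assms have "{card C | C. is_vertex_cover n E C} \<noteq> {}"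
    using is_vertex_cover_all_vertices by blast
  from Min_in[OF finite_vertex_cover_cards this] that show thesis
    unfolding vertex_cover_number_def by auto
qed

lemma vertex_cover_number_mono:
  assumes "\<forall>e\<in>F. valid_edge n e" "E \<subseteq> F"
  shows "vertex_cover_number n E \<le> vertex_cover_number n F"
proof -
  obtain C where C: "is_vertex_cover n F C" "vertex_cover_number n F = card C"
    using assms(1) by (rule ex_minimum_vertex_cover)
  with assms(2) have "is_vertex_cover n E C" unfolding is_vertex_cover_def by blast
  with C(2) show ?thesis by (simp add: vertex_cover_number_le_card)
qed

lemma vertex_cover_number_Un_le:
  assumes "\<forall>e\<in>E \<union> F. valid_edge n e"
  shows "vertex_cover_number n (E \<union> F) \<le> vertex_cover_number n E + vertex_cover_number n F"
proof -
  obtain C1 where C1: "is_vertex_cover n E C1" "vertex_cover_number n E = card C1"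
    using assms by (meson UnI1 ex_minimum_vertex_cover)
  obtain C2 where C2: "is_vertex_cover n F C2" "vertex_cover_number n F = card C2"
    using assms by (meson UnI2 ex_minimum_vertex_cover)
  have "is_vertex_cover n (E \<union> F) (C1 \<union> C2)"
    using C1(1) C2(1) unfolding is_vertex_cover_def by blast
  then have "vertex_cover_number n (E \<union> F) \<le> card (C1 \<union> C2)"
    by (rule vertex_cover_number_le_card)
  also have "\<dots> \<le> card C1 + card C2" by (rule card_Un_le)
  finally show ?thesis using C1(2) C2(2) by simp
qed

lemma almost_smooth_max_matching: "almost_smooth 2 max_matching"
proof -
  have "max_matching = (\<lambda>n S. real (matching_number (set S)))"
    by (simp add: fun_eq_iff max_matching_def matching_number_def)
  moreover have "almost_smooth 2 (\<lambda>n S. real (matching_number (set S)))"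
  proof (rule almost_smooth_2_if_mono_subadditive[where c = 1 and k = 2])
    fix n and E :: "edge set"
    assume "finite E" "\<forall>e\<in>E. valid_edge n e"
    then have "matching_number E \<le> n * n"
      using matching_number_le_card card_valid_edges_le order_trans by blast
    then have "real (matching_number E) \<le> real n * real n"
      by (metis of_nat_le_iff of_nat_mult)
    also have "\<dots> \<le> 1 * (real n + 1) ^ 2" by (simp add: power2_eq_square algebra_simps)
    finally show "real (matching_number E) \<le> 1 * (real n + 1) ^ 2" .
  qed (auto simp flip: of_nat_add intro: matching_number_mono matching_number_Un_le)
  ultimately show ?thesis by simp
qed

lemma almost_smooth_min_vertex_cover: "almost_smooth 2 min_vertex_cover"
proof -
  have "min_vertex_cover = (\<lambda>n S. real (vertex_cover_number n (set S)))"
    by (simp add: fun_eq_iff min_vertex_cover_def vertex_cover_number_def)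
  moreover have "almost_smooth 2 (\<lambda>n S. real (vertex_cover_number n (set S)))"
    by (rule almost_smooth_2_if_mono_subadditive[where c = 1 and k = 1])
      (auto simp flip: of_nat_add dest: vertex_cover_number_le_n
        intro: vertex_cover_number_mono vertex_cover_number_Un_le)
  ultimately show ?thesis by simp
qed

theorem corollary2p5:
  shows "almost_smooth 2 max_matching \<and> almost_smooth 2 min_vertex_cover"
  using almost_smooth_max_matching almost_smooth_min_vertex_cover by blast

end
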